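(* Let $G=(V,E)$ be a finite graph with vertices $V=\{v_1,\dots,v_n\}$ (loops and parallel edges allowed), and fix an orientation $\mathcal{O}$ of $G$. Then the number of distinct score vectors of orientations of $G$ equals the number of distinct score vectors of spanning subdigraphs of $G_{\mathcal{O}}$.
   Context: An orientation $\mathcal{O}$ of $G$ assigns to each edge with endpoints $v,w$ one of the ordered pairs $(v,w)$ or $(w,v)$ (a loop at $v$ gets $(v,v)$), giving the directed graph $G_{\mathcal{O}}$ on $V$. A spanning subdigraph of $G_{\mathcal{O}}$ is $(V,\{\mathcal{O}(e):e\in F\})$ for some $F\subseteq E$. For a directed graph $D$ on $V$, the score vector is $s_D=(s_D(v_1),\dots,s_D(v_n))$ with $s_D(v_i)=\deg^+_D(v_i)-\deg^-_D(v_i)$, where $\deg^+_D(v_i)$ (resp. $\deg^-_D(v_i)$) is the number of arcs with tail (resp. head) $v_i$. *)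

theory Defs
  imports Main
begin

text \<open>A finite multigraph (loops and parallel edges allowed): vertex set V, edge set E
  (edge identifiers), and for each edge its set of endpoints (one endpoint for a loop,
  two for an ordinary edge).\<close>
definition multigraph :: "'v set \<Rightarrow> 'e set \<Rightarrow> ('e \<Rightarrow> 'v set) \<Rightarrow> bool" where
  "multigraph V E ends \<longleftrightarrow> finite V \<and> finite E \<and>
     (\<forall>e\<in>E. ends e \<subseteq> V \<and> ends e \<noteq> {} \<and> card (ends e) \<le> 2)"

definition is_orientation :: "'e set \<Rightarrow> ('e \<Rightarrow> 'v set) \<Rightarrow> ('e \<Rightarrow> 'v \<times> 'v) \<Rightarrow> bool" where
  "is_orientation E ends Or \<longleftrightarrow> (\<forall>e\<in>E. {fst (Or e), snd (Or e)} = ends e)"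

text \<open>Score vector of the directed graph with arc set {Or e | e in F}:
  out-degree minus in-degree at each vertex.\<close>
definition score :: "('e \<Rightarrow> 'v \<times> 'v) \<Rightarrow> 'e set \<Rightarrow> 'v \<Rightarrow> int" where
  "score Or F v = int (card {e\<in>F. fst (Or e) = v}) - int (card {e\<in>F. snd (Or e) = v})"

end

theory Submission
  imports Defs
begin

text \<open>Every orientation arises from the fixed orientation \<open>O0\<close> by reversing the arcs of some
  set \<open>F \<subseteq> E\<close>, and reversing \<open>F\<close> changes the score vector from \<open>s(E)\<close> to
  \<open>s(E) - 2 s(F)\<close>, where \<open>s\<close> is the score with respect to \<open>O0\<close>. So the score vectors of orientations
  are the image of the score vectors of spanning subdigraphs of \<open>G\<^sub>O\<^sub>0\<close> under the injective
  map \<open>x \<mapsto> s(E) - 2x\<close>.\<close>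

definition reverse_on :: "'e set \<Rightarrow> ('e \<Rightarrow> 'v \<times> 'v) \<Rightarrow> 'e \<Rightarrow> 'v \<times> 'v" where
  "reverse_on F Or = (\<lambda>e. if e \<in> F then prod.swap (Or e) else Or e)"

lemma score_cong:
  assumes "\<And>e. e \<in> F \<Longrightarrow> Or e = Or' e"
  shows "score Or F = score Or' F"
proof
  fix v
  have "{e\<in>F. fst (Or e) = v} = {e\<in>F. fst (Or' e) = v}"
    and "{e\<in>F. snd (Or e) = v} = {e\<in>F. snd (Or' e) = v}"
    using assms by auto
  then show "score Or F v = score Or' F v" by (simp add: score_def)
qed

lemma score_swap: "score (prod.swap \<circ> Or) F v = - score Or F v"
  by (simp add: score_def)

lemma score_Un_disjoint:
  assumes "finite A" "finite B" "A \<inter> B = {}"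
  shows "score Or (A \<union> B) v = score Or A v + score Or B v"
proof -
  have filter_Un: "{e \<in> A \<union> B. P e} = {e \<in> A. P e} \<union> {e \<in> B. P e}" for P by blast
  have "card {e \<in> A \<union> B. P e} = card {e \<in> A. P e} + card {e \<in> B. P e}" for P
    unfolding filter_Un using assms by (intro card_Un_disjoint) auto
  then show ?thesis by (simp add: score_def)
qed

lemma score_reverse_on:
  assumes "finite E" "F \<subseteq> E"
  shows "score (reverse_on F Or) E v = score Or E v - 2 * score Or F v"
proof -
  have split: "score Or' E v = score Or' F v + score Or' (E - F) v" for Or'
    using score_Un_disjoint[of F "E - F" Or' v] assms by (simp add: Un_absorb1 finite_subset)
  have "score (reverse_on F Or) F = score (prod.swap \<circ> Or) F"
    by (rule score_cong) (simp add: reverse_on_def)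
  moreover have "score (reverse_on F Or) (E - F) = score Or (E - F)"
    by (rule score_cong) (simp add: reverse_on_def)
  ultimately show ?thesis
    using split[of Or] split[of "reverse_on F Or"] by (simp add: score_swap)
qed

lemma is_orientation_reverse_on:
  "is_orientation E ends Or \<Longrightarrow> is_orientation E ends (reverse_on F Or)"
  by (auto simp: is_orientation_def reverse_on_def insert_commute)

lemma orientation_eq_reverse_on:
  assumes "is_orientation E ends O0" "is_orientation E ends Or" "e \<in> E"
  shows "Or e = reverse_on {e\<in>E. Or e \<noteq> O0 e} O0 e"
proof -
  have "{fst (Or e), snd (Or e)} = {fst (O0 e), snd (O0 e)}"
    using assms by (simp add: is_orientation_def)
  then have "Or e = O0 e \<or> Or e = prod.swap (O0 e)"
    by (auto simp: doubleton_eq_iff prod_eq_iff)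
  then show ?thesis using assms(3) by (auto simp: reverse_on_def)
qed

theorem lemma2p14:
  fixes V :: "'v set" and E :: "'e set" and ends :: "'e \<Rightarrow> 'v set"
    and O0 :: "'e \<Rightarrow> 'v \<times> 'v"
  assumes "multigraph V E ends"
    and "is_orientation E ends O0"
  shows "card {score Or E | Or. is_orientation E ends Or} = card {score O0 F | F. F \<subseteq> E}"
proof -
  have "finite E" using assms(1) by (simp add: multigraph_def)
  define flip :: "('v \<Rightarrow> int) \<Rightarrow> 'v \<Rightarrow> int"
    where "flip s = (\<lambda>v. score O0 E v - 2 * s v)" for s
  have score_flip: "score (reverse_on F O0) E = flip (score O0 F)" if "F \<subseteq> E" for F
    unfolding flip_def by (rule ext) (rule score_reverse_on[OF \<open>finite E\<close> that])
  have "{score Or E | Or. is_orientation E ends Or} = flip ` {score O0 F | F. F \<subseteq> E}"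
  proof (intro set_eqI iffI)
    fix s assume "s \<in> {score Or E | Or. is_orientation E ends Or}"
    then obtain Or where s: "s = score Or E" and Or: "is_orientation E ends Or" by blast
    let ?F = "{e\<in>E. Or e \<noteq> O0 e}"
    have "s = score (reverse_on ?F O0) E"
      unfolding s using orientation_eq_reverse_on[OF assms(2) Or] by (rule score_cong)
    also have "\<dots> = flip (score O0 ?F)" by (rule score_flip) blast
    finally show "s \<in> flip ` {score O0 F | F. F \<subseteq> E}" by blast
  next
    fix s assume "s \<in> flip ` {score O0 F | F. F \<subseteq> E}"
    then obtain F where "F \<subseteq> E" and s: "s = flip (score O0 F)" by blast
    then have "s = score (reverse_on F O0) E" by (simp add: score_flip)
    then show "s \<in> {score Or E | Or. is_orientation E ends Or}"
      using is_orientation_reverse_on[OF assms(2)] by blast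
  qed
  moreover have "inj_on flip X" for X by (rule inj_onI) (simp add: flip_def fun_eq_iff)
  ultimately show ?thesis by (simp add: card_image)
qed

end
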